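(* Let $A_1$ and $A_2$ be algebras of the same dimension $n$ and let $K:A_1\to A_2$ be an algebra isomorphism, identified with its (nonsingular) $n\times n$ matrix in the standard bases. Then $$\mathfrak{u}_{A_1}=K^T\mathfrak{u}_{A_2}K:=\{K^TLK:\ L\in\mathfrak{u}_{A_2}\}.$$
   Context: Throughout, an "algebra" is a real finite-dimensional unital associative algebra whose underlying vector space is $\mathbb{R}^n$ ($n\ge1$), with the standard basis and standard topology; elements are written as column vectors $s=(x_1,\dots,x_n)^T$, and $\mathbf{d}s=(dx_1,\dots,dx_n)^T$. The multiplicative identity is $\mathbf{1}_A$. An uncurling metric of $A$ is a real symmetric $n\times n$ matrix $L$ such that the differential 1-form $(s^{-1})^TL\,\mathbf{d}s=\sum_i (Ls^{-1})_i\,dx_i$ is closed, i.e. $d\big((s^{-1})^TL\,\mathbf{d}s\big)=0$, on an open ball centered at $\mathbf{1}_A$ consisting only of units (here $s^{-1}$ is the multiplicative inverse of $s$ in $A$). The anti-rotor $\mathfrak{u}_A$ is the real vector space of all uncurling metrics of $A$. *)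

theory Defs
  imports "HOL-Analysis.Analysis"
begin

definition is_algebra :: "(real^'n \<Rightarrow> real^'n \<Rightarrow> real^'n) \<Rightarrow> real^'n \<Rightarrow> bool" where
  "is_algebra mul one \<longleftrightarrow> bilinear mul
     \<and> (\<forall>x y z. mul (mul x y) z = mul x (mul y z))
     \<and> (\<forall>x. mul one x = x \<and> mul x one = x)"

definition alg_unit :: "(real^'n \<Rightarrow> real^'n \<Rightarrow> real^'n) \<Rightarrow> real^'n \<Rightarrow> real^'n \<Rightarrow> bool" where
  "alg_unit mul one s \<longleftrightarrow> (\<exists>t. mul s t = one \<and> mul t s = one)"

definition alg_inv :: "(real^'n \<Rightarrow> real^'n \<Rightarrow> real^'n) \<Rightarrow> real^'n \<Rightarrow> real^'n \<Rightarrow> real^'n" where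
  "alg_inv mul one s = (THE t. mul s t = one \<and> mul t s = one)"

text \<open>A differential 1-form \<open>\<Sum>i. \<omega>(s)_i dx_i\<close> on an open set U is closed:
  it is differentiable and \<open>\<partial>\<omega>_i/\<partial>x_j = \<partial>\<omega>_j/\<partial>x_i\<close>.\<close>
definition closed_form_on :: "(real^'n) set \<Rightarrow> (real^'n \<Rightarrow> real^'n) \<Rightarrow> bool" where
  "closed_form_on U \<omega> \<longleftrightarrow> (\<forall>s\<in>U. \<exists>D. (\<omega> has_derivative D) (at s) \<and>
      (\<forall>i j. D (axis j 1) $ i = D (axis i 1) $ j))"

definition uncurling_metric ::
  "(real^'n \<Rightarrow> real^'n \<Rightarrow> real^'n) \<Rightarrow> real^'n \<Rightarrow> real^'n^'n \<Rightarrow> bool" where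
  "uncurling_metric mul one L \<longleftrightarrow> transpose L = L \<and>
     (\<exists>r>0. (\<forall>s\<in>ball one r. alg_unit mul one s) \<and>
            closed_form_on (ball one r) (\<lambda>s. L *v alg_inv mul one s))"

definition anti_rotor :: "(real^'n \<Rightarrow> real^'n \<Rightarrow> real^'n) \<Rightarrow> real^'n \<Rightarrow> (real^'n^'n) set" where
  "anti_rotor mul one = {L. uncurling_metric mul one L}"

end

theory Submission imports Defs begin

text \<open>An algebra isomorphism \<open>K\<close> intertwines the inversions, \<open>K s\<inverse> = (K s)\<inverse>\<close>, so the
  1-form of \<open>K\<^sup>T L K\<close> is the pullback along the linear map \<open>K\<close> of the 1-form of \<open>L\<close>. The pullback
  of a closed form along a linear map is closed, since its Jacobian \<open>K\<^sup>T D K\<close> stays symmetric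
  when \<open>D\<close> is. This gives one inclusion; applying it to the isomorphism \<open>K\<inverse>\<close> gives the other.\<close>

definition alg_iso ::
  "real^'n^'n \<Rightarrow> (real^'n \<Rightarrow> real^'n \<Rightarrow> real^'n) \<Rightarrow> real^'n
    \<Rightarrow> (real^'n \<Rightarrow> real^'n \<Rightarrow> real^'n) \<Rightarrow> real^'n \<Rightarrow> bool" where
  "alg_iso K mul1 one1 mul2 one2 \<longleftrightarrow> invertible K
     \<and> (\<forall>x y. K *v mul1 x y = mul2 (K *v x) (K *v y)) \<and> K *v one1 = one2"

lemma alg_iso_inverse:
  assumes iso: "alg_iso K mul1 one1 mul2 one2"
    and left: "Ki ** K = mat 1" and right: "K ** Ki = mat 1"
  shows "alg_iso Ki mul2 one2 mul1 one1"
proof -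
  have K_Ki: "K *v (Ki *v x) = x" for x
    by (simp add: matrix_vector_mul_assoc right)
  have Ki_K: "Ki *v (K *v x) = x" for x
    by (simp add: matrix_vector_mul_assoc left)
  have "invertible Ki"
    using left right invertible_def by blast
  moreover have "Ki *v mul2 x y = mul1 (Ki *v x) (Ki *v y)" for x y
    using iso Ki_K[of "mul1 (Ki *v x) (Ki *v y)"] unfolding alg_iso_def by (simp add: K_Ki)
  moreover have "Ki *v one2 = one1"
    using iso Ki_K unfolding alg_iso_def by blast
  ultimately show ?thesis
    unfolding alg_iso_def by blast
qed

lemma alg_inv_eqI:
  assumes "is_algebra mul one" "mul s t = one" "mul t s = one"
  shows "alg_inv mul one s = t"
  unfolding alg_inv_def
proof (rule the_equality)
  show "mul s t = one \<and> mul t s = one"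
    using assms by simp
next
  fix t' assume t': "mul s t' = one \<and> mul t' s = one"
  have "t' = mul t' (mul s t)"
    using assms unfolding is_algebra_def by simp
  also have "\<dots> = mul (mul t' s) t"
    using assms(1) unfolding is_algebra_def by simp
  also have "\<dots> = t"
    using t' assms(1) unfolding is_algebra_def by simp
  finally show "t' = t" .
qed

lemma alg_iso_reflects_unit:
  assumes iso: "alg_iso K mul1 one1 mul2 one2" and unit: "alg_unit mul2 one2 (K *v s)"
  shows "alg_unit mul1 one1 s"
proof -
  obtain Ki where left: "Ki ** K = mat 1" and right: "K ** Ki = mat 1"
    using iso unfolding alg_iso_def invertible_def by blast
  obtain t where t: "mul2 (K *v s) t = one2" "mul2 t (K *v s) = one2"
    using unit unfolding alg_unit_def by blast
  have "mul1 s (Ki *v t) = one1" "mul1 (Ki *v t) s = one1"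
    using alg_iso_inverse[OF iso left right] t unfolding alg_iso_def
    by (metis left matrix_vector_mul_assoc matrix_vector_mul_lid)+
  then show ?thesis
    unfolding alg_unit_def by blast
qed

lemma alg_iso_alg_inv:
  assumes iso: "alg_iso K mul1 one1 mul2 one2"
    and "is_algebra mul1 one1" "is_algebra mul2 one2" and unit: "alg_unit mul1 one1 s"
  shows "K *v alg_inv mul1 one1 s = alg_inv mul2 one2 (K *v s)"
proof -
  obtain t where t: "mul1 s t = one1" "mul1 t s = one1"
    using unit unfolding alg_unit_def by blast
  then have "mul2 (K *v s) (K *v t) = one2" "mul2 (K *v t) (K *v s) = one2"
    using iso unfolding alg_iso_def by metis+
  then show ?thesis
    using alg_inv_eqI assms(2,3) t by metis
qed

lemma symmetric_jacobian_inner_commute: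
  fixes D :: "real^'n \<Rightarrow> real^'n"
  assumes "linear D" and "\<forall>i j. D (axis j 1) $ i = D (axis i 1) $ j"
  shows "inner u (D v) = inner v (D u)"
proof -
  let ?M = "matrix D"
  have M: "D x = ?M *v x" for x
    using assms(1) by (simp add: matrix_works)
  have "transpose ?M = ?M"
    using assms(2) by (simp add: matrix_def transpose_def vec_eq_iff)
  then have "inner u (?M *v v) = inner (?M *v u) v"
    by (metis dot_lmul_matrix transpose_transpose vector_transpose_matrix)
  then show ?thesis
    using M by (simp add: inner_commute)
qed

lemma closed_form_on_linear_pullback:
  fixes K :: "real^'n^'m" and \<omega> :: "real^'m \<Rightarrow> real^'m"
  assumes "closed_form_on U \<omega>"
  shows "closed_form_on {x. K *v x \<in> U} (\<lambda>x. transpose K *v \<omega> (K *v x))"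
  unfolding closed_form_on_def
proof
  fix s assume "s \<in> {x. K *v x \<in> U}"
  then obtain D where D: "(\<omega> has_derivative D) (at (K *v s))"
    and D_sym: "\<forall>i j. D (axis j 1) $ i = D (axis i 1) $ j"
    using assms unfolding closed_form_on_def by blast
  have linear_K: "linear ((*v) K)" "linear ((*v) (transpose K))"
    by (simp_all add: matrix_vector_mul_linear)
  have "((\<lambda>x. transpose K *v \<omega> (K *v x)) has_derivative (\<lambda>h. transpose K *v D (K *v h))) (at s)"
    using diff_chain_at[OF diff_chain_at[OF linear_imp_has_derivative[OF linear_K(1)] D]
        linear_imp_has_derivative[OF linear_K(2)]]
    by (simp add: o_def)
  moreover have "(transpose K *v D (K *v axis j 1)) $ i = (transpose K *v D (K *v axis i 1)) $ j"
    for i j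
  proof -
    have component: "(transpose K *v w) $ i = inner (K *v axis i 1) w" for w i
      by (simp add: dot_lmul_matrix[symmetric] inner_commute inner_axis')
    show ?thesis
      unfolding component
      using symmetric_jacobian_inner_commute[OF has_derivative_linear[OF D] D_sym] by simp
  qed
  ultimately show "\<exists>D. ((\<lambda>x. transpose K *v \<omega> (K *v x)) has_derivative D) (at s)
      \<and> (\<forall>i j. D (axis j 1) $ i = D (axis i 1) $ j)"
    by blast
qed

lemma closed_form_on_cong:
  assumes "open U" and "\<And>x. x \<in> U \<Longrightarrow> \<omega> x = \<eta> x" and "closed_form_on U \<omega>"
  shows "closed_form_on U \<eta>"
  using assms has_derivative_transform_within_open unfolding closed_form_on_def by metis

lemma uncurling_metric_pullback:
  assumes iso: "alg_iso K mul1 one1 mul2 one2"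
    and A1: "is_algebra mul1 one1" and A2: "is_algebra mul2 one2"
    and L: "uncurling_metric mul2 one2 L"
  shows "uncurling_metric mul1 one1 (transpose K ** L ** K)"
proof -
  obtain r where "r > 0" and units: "\<forall>s\<in>ball one2 r. alg_unit mul2 one2 s"
    and closed: "closed_form_on (ball one2 r) (\<lambda>s. L *v alg_inv mul2 one2 s)"
    and L_sym: "transpose L = L"
    using L unfolding uncurling_metric_def by blast
  let ?V = "{x. K *v x \<in> ball one2 r}"
  have "open ?V"
    using open_vimage[of "ball one2 r" "(*v) K"]
    by (simp add: vimage_def linear_continuous_on matrix_vector_mul_linear linear_conv_bounded_linear)
  moreover have "one1 \<in> ?V"
    using iso \<open>r > 0\<close> unfolding alg_iso_def by simp
  ultimately obtain r' where "r' > 0" and r': "ball one1 r' \<subseteq> ?V"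
    using open_contains_ball by blast
  have units1: "\<forall>s\<in>ball one1 r'. alg_unit mul1 one1 s"
    using r' units alg_iso_reflects_unit[OF iso] by blast
  have "closed_form_on ?V (\<lambda>x. transpose K *v (L *v alg_inv mul2 one2 (K *v x)))"
    using closed_form_on_linear_pullback[OF closed] by simp
  then have "closed_form_on (ball one1 r') (\<lambda>x. transpose K *v (L *v alg_inv mul2 one2 (K *v x)))"
    using r' unfolding closed_form_on_def by blast
  then have "closed_form_on (ball one1 r') (\<lambda>s. (transpose K ** L ** K) *v alg_inv mul1 one1 s)"
    by (rule closed_form_on_cong[rotated 2])
      (simp_all add: units1 alg_iso_alg_inv[OF iso A1 A2] flip: matrix_vector_mul_assoc)
  moreover have "transpose (transpose K ** L ** K) = transpose K ** L ** K"
    by (simp add: matrix_transpose_mul L_sym matrix_mul_assoc)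
  ultimately show ?thesis
    unfolding uncurling_metric_def using \<open>r' > 0\<close> units1 by blast
qed

theorem theorem2p2:
  fixes mul1 mul2 :: "real^'n \<Rightarrow> real^'n \<Rightarrow> real^'n"
    and one1 one2 :: "real^'n" and K :: "real^'n^'n"
  assumes "is_algebra mul1 one1" and "is_algebra mul2 one2"
    and "invertible K"
    and "\<And>x y. K *v mul1 x y = mul2 (K *v x) (K *v y)"
    and "K *v one1 = one2"
  shows "anti_rotor mul1 one1 = (\<lambda>L. transpose K ** L ** K) ` anti_rotor mul2 one2"
proof
  have iso: "alg_iso K mul1 one1 mul2 one2"
    using assms(3-5) unfolding alg_iso_def by blast
  obtain Ki where left: "Ki ** K = mat 1" and right: "K ** Ki = mat 1"
    using assms(3) unfolding invertible_def by blast
  show "anti_rotor mul1 one1 \<subseteq> (\<lambda>L. transpose K ** L ** K) ` anti_rotor mul2 one2"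
  proof
    fix L assume "L \<in> anti_rotor mul1 one1"
    then have "transpose Ki ** L ** Ki \<in> anti_rotor mul2 one2"
      using uncurling_metric_pullback[OF alg_iso_inverse[OF iso left right] assms(2,1)]
      unfolding anti_rotor_def by blast
    moreover have "L = transpose K ** (transpose Ki ** L ** Ki) ** K"
      by (metis left matrix_mul_assoc matrix_mul_lid matrix_mul_rid matrix_transpose_mul transpose_mat)
    ultimately show "L \<in> (\<lambda>L. transpose K ** L ** K) ` anti_rotor mul2 one2"
      by blast
  qed
  show "(\<lambda>L. transpose K ** L ** K) ` anti_rotor mul2 one2 \<subseteq> anti_rotor mul1 one1"
    using uncurling_metric_pullback[OF iso assms(1,2)] unfolding anti_rotor_def by blast
qed

end
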